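(* Consider the control setting described in the context, and let $M_1, M_2, \dots$ be generated by the FTRL Controller (FTRL-C) with $\sigma = \frac{\sqrt{\delta^2+2lz}}{\sqrt{2}\,\kappa_M\delta}$, where $z = p\,w\sqrt{d_u}\,\kappa_B$. Assume $h_1>0$. Then for every horizon $T\ge 1$, $$\mathcal{R}_T \le \frac{2\kappa_M}{\delta}\Big(\sqrt{2(\delta^2+2lz)}+\frac{lz}{\delta\sqrt{h_1}}\Big)\sqrt{\sum_{t=1}^T \max_{s\le t} g_s}.$$
   Context: System: $\mathbf{x}_{t+1}=A\mathbf{x}_t+B\mathbf{u}_t+\mathbf{w}_t$ for $t=1,2,\dots$, with $\mathbf{x}_t\in\mathbb{R}^{d_x}$, $\mathbf{u}_t\in\mathbb{R}^{d_u}$, $\mathbf{x}_1=0$, and disturbances $\mathbf{w}_t$ chosen arbitrarily (adversarially) subject to $\|\mathbf{w}_t\|\le w$; set $\mathbf{w}_t=0$ for $t\le 0$. The disturbance $\mathbf{w}_t$ and the cost $c_t$ are revealed after $\mathbf{u}_t$ is chosen. The spectral norm of $A$ equals $1-\delta$ with $0<\delta<1$, and $\|B\|\le\kappa_B$. Norms are Euclidean for vectors and Frobenius for matrices; $\langle X,Y\rangle=\sum_{ij}X^{(i,j)}Y^{(i,j)}$; $h_{a:b}=\sum_{s=a}^b h_s$. Policy class (disturbance-action controllers with memory $p\ge1$): a parameter is $M=[M^{[1]}|\cdots|M^{[p]}]$ with $M^{[j]}\in\mathbb{R}^{d_u\times d_x}$, restricted to $\mathcal{M}=\{M:\sum_{j=1}^p\|M^{[j]}\|\le\kappa_M\}$.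 Using parameter $M_t$ at step $t$ means playing $\mathbf{u}_t=\sum_{j=1}^p M_t^{[j]}\mathbf{w}_{t-j}$. The actual states/actions under the sequence $M_1,M_2,\dots$ are denoted $\mathbf{x}_t,\mathbf{u}_t$; for a fixed $M\in\mathcal{M}$, $\mathbf{x}_t(M),\mathbf{u}_t(M)$ denote the state and action at step $t$ had $M$ been used at every step $1,\dots,t$ (same disturbances). Costs $c_t:\mathbb{R}^{d_x}\times\mathbb{R}^{d_u}\to\mathbb{R}$ are convex and $l$-Lipschitz. Let $f_t(M)=c_t(\mathbf{x}_t(M),\mathbf{u}_t(M))$ (convex in $M$) and $G_t=\nabla f_t(M_t)$ (a (sub)gradient with respect to $M$), $g_t=\max(\|G_t\|,\|G_t\|^2)$. FTRL-C: $M_1\in\mathcal{M}$ arbitrary; for $t\ge1$, $M_{t+1}=\arg\min_{M\in\mathcal{M}}\sum_{s=1}^t\big(f_s(M)+r_s(M)\big)$ with $r_s(M)=\frac{\sigma_s}{2}\|M-M_s\|^2$, $\sigma_1=\sigma\sqrt{h_1}$, $\sigma_t=\sigma(\sqrt{h_{1:t}}-\sqrt{h_{1:t-1}})$ for $t\ge2$, and $h_t=\max_{s\le t}g_s$. Policy regret: $\mathcal{R}_T=\sum_{t=1}^T c_t(\mathbf{x}_t,\mathbf{u}_t)-\sum_{t=1}^T c_t(\mathbf{x}_t(M_\star),\mathbf{u}_t(M_\star))$, where $M_\star\in\arg\min_{M\in\mathcal{M}}\sum_{t=1}^T f_t(M)$. *)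

theory Defs
  imports "HOL-Analysis.Analysis"
begin

text \<open>State trajectory of x_{t+1} = A x_t + B u_t + w_t, x_1 = 0, driven by the
  action sequence u and disturbance sequence w (time index t = 1, 2, ...;
  the value at index 0 is an unused dummy).\<close>
fun traj :: "real^'dx^'dx \<Rightarrow> real^'du^'dx \<Rightarrow> (nat \<Rightarrow> real^'dx) \<Rightarrow> (nat \<Rightarrow> real^'du)
             \<Rightarrow> nat \<Rightarrow> real^'dx" where
  "traj A B w u 0 = 0"
| "traj A B w u (Suc t) =
     (if t = 0 then 0 else A *v traj A B w u t + B *v u t + w t)"

text \<open>Disturbance-action controller: block j of M (j ranges over the finite type 'p,
  with p = CARD('p) blocks) multiplies the disturbance with lag (lag j) in {1..p}.
  Disturbances with index \<le> 0 are 0 (via w 0 = 0 and truncated subtraction).\<close>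
definition dac :: "('p \<Rightarrow> nat) \<Rightarrow> real^'dx^'du^'p \<Rightarrow> (nat \<Rightarrow> real^'dx) \<Rightarrow> nat \<Rightarrow> real^'du" where
  "dac lag M w t = (\<Sum>j\<in>UNIV. (M $ j) *v w (t - lag j))"

definition Mset :: "real \<Rightarrow> (real^'dx^'du^'p) set" where
  "Mset \<kappa>M = {M. (\<Sum>j\<in>UNIV. norm (M $ j)) \<le> \<kappa>M}"

definition xM :: "real^'dx^'dx \<Rightarrow> real^'du^'dx \<Rightarrow> ('p \<Rightarrow> nat) \<Rightarrow> (nat \<Rightarrow> real^'dx)
                  \<Rightarrow> real^'dx^'du^'p \<Rightarrow> nat \<Rightarrow> real^'dx" where
  "xM A B lag w M t = traj A B w (dac lag M w) t"

definition fcost :: "(nat \<Rightarrow> real^'dx \<Rightarrow> real^'du \<Rightarrow> real) \<Rightarrow> real^'dx^'dx \<Rightarrow> real^'du^'dx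
                  \<Rightarrow> ('p \<Rightarrow> nat) \<Rightarrow> (nat \<Rightarrow> real^'dx) \<Rightarrow> nat \<Rightarrow> real^'dx^'du^'p \<Rightarrow> real" where
  "fcost c A B lag w t M = c t (xM A B lag w M t) (dac lag M w t)"

end

theory Submission
  imports Defs
begin

(*
  Write x_t for the actual state and x_t(M_t) for the state the current parameter would have
  produced had it been used from the start.  Since ||A|| = 1 - \<delta>, the mismatch
  ||x_t - x_t(M_t)|| contracts by 1 - \<delta> per step and grows by at most K/\<delta> ||M_{t+1} - M_t||
  (K = p w \<kappa>_B), so by l-Lipschitzness the actual cost exceeds \<Sum> f_t(M_t) by at most
  l K/\<delta>^2 \<Sum> ||M_{t+1} - M_t||.  What remains is the regret of follow-the-regularized-leader
  on the convex functions f_t: the objective of round t is \<sigma> sqrt(H_t)-strongly convex, with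
  H_t = h_1 + ... + h_t, which bounds both the move ||M_{t+1} - M_t|| by ||G_t|| / (\<sigma> sqrt(H_t))
  and the per-round loss by ||G_t||^2 / (2 \<sigma> sqrt(H_t)).  Summing with
  \<Sum> h_t / sqrt(H_t) <= 2 sqrt(H_T) gives ((1 + 2 l K/\<delta>^2) / \<sigma> + 2 \<sigma> \<kappa>_M^2) sqrt(H_T),
  and the chosen \<sigma> balances the two terms.
*)

section \<open>Strong convexity\<close>

definition strongly_convex_on :: "'a::real_normed_vector set \<Rightarrow> real \<Rightarrow> ('a \<Rightarrow> real) \<Rightarrow> bool" where
  "strongly_convex_on K \<mu> F \<longleftrightarrow> (\<forall>x\<in>K. \<forall>y\<in>K. \<forall>a. 0 \<le> a \<longrightarrow> a \<le> 1 \<longrightarrow>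
     F ((1 - a) *\<^sub>R x + a *\<^sub>R y) \<le> (1 - a) * F x + a * F y - \<mu> / 2 * a * (1 - a) * (norm (y - x))\<^sup>2)"

lemma convex_on_imp_strongly_convex_on_zero: "convex_on K F \<Longrightarrow> strongly_convex_on K 0 F"
  by (simp add: strongly_convex_on_def convex_onD)

lemma power2_norm_convex_combination_diff:
  fixes x y m :: "'a::real_inner"
  shows "(norm ((1 - a) *\<^sub>R x + a *\<^sub>R y - m))\<^sup>2
    = (1 - a) * (norm (x - m))\<^sup>2 + a * (norm (y - m))\<^sup>2 - a * (1 - a) * (norm (y - x))\<^sup>2"
proof -
  have "(1 - a) *\<^sub>R x + a *\<^sub>R y - m = (1 - a) *\<^sub>R (x - m) + a *\<^sub>R (y - m)"
    and "y - x = (y - m) - (x - m)"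
    by (simp_all add: algebra_simps)
  then show ?thesis
    unfolding power2_norm_eq_inner
    by (simp add: inner_add_left inner_add_right inner_diff_left inner_diff_right inner_commute
        algebra_simps power2_eq_square)
qed

lemma strongly_convex_on_scaled_sq_dist:
  fixes m :: "'a::real_inner"
  shows "strongly_convex_on K \<mu> (\<lambda>x. \<mu> / 2 * (norm (x - m))\<^sup>2)"
  unfolding strongly_convex_on_def
proof (intro ballI allI impI)
  fix x y a
  show "\<mu> / 2 * (norm ((1 - a) *\<^sub>R x + a *\<^sub>R y - m))\<^sup>2
      \<le> (1 - a) * (\<mu> / 2 * (norm (x - m))\<^sup>2) + a * (\<mu> / 2 * (norm (y - m))\<^sup>2)
        - \<mu> / 2 * a * (1 - a) * (norm (y - x))\<^sup>2"
    unfolding power2_norm_convex_combination_diff by (simp add: field_simps)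
qed

lemma strongly_convex_on_add:
  assumes "strongly_convex_on K \<mu> F" and "strongly_convex_on K \<nu> F'"
  shows "strongly_convex_on K (\<mu> + \<nu>) (\<lambda>x. F x + F' x)"
  unfolding strongly_convex_on_def
proof (intro ballI allI impI)
  fix x y and a :: real
  assume "x \<in> K" "y \<in> K" "0 \<le> a" "a \<le> 1"
  then have "F ((1 - a) *\<^sub>R x + a *\<^sub>R y) + F' ((1 - a) *\<^sub>R x + a *\<^sub>R y)
      \<le> ((1 - a) * F x + a * F y - \<mu> / 2 * a * (1 - a) * (norm (y - x))\<^sup>2)
        + ((1 - a) * F' x + a * F' y - \<nu> / 2 * a * (1 - a) * (norm (y - x))\<^sup>2)"
    using assms unfolding strongly_convex_on_def by (intro add_mono) auto
  then show "F ((1 - a) *\<^sub>R x + a *\<^sub>R y) + F' ((1 - a) *\<^sub>R x + a *\<^sub>R y)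
      \<le> (1 - a) * (F x + F' x) + a * (F y + F' y) - (\<mu> + \<nu>) / 2 * a * (1 - a) * (norm (y - x))\<^sup>2"
    by (simp add: algebra_simps add_divide_distrib)
qed

lemma strongly_convex_on_sum:
  assumes "finite I" and "\<And>i. i \<in> I \<Longrightarrow> strongly_convex_on K (\<mu> i) (F i)"
  shows "strongly_convex_on K (\<Sum>i\<in>I. \<mu> i) (\<lambda>x. \<Sum>i\<in>I. F i x)"
  using assms
proof (induction I rule: finite_induct)
  case empty
  then show ?case
    by (simp add: strongly_convex_on_def)
next
  case (insert i I)
  then show ?case
    using strongly_convex_on_add[of K "\<mu> i" "F i"] by simp
qed

lemma strongly_convex_on_min_gap:
  assumes F: "strongly_convex_on K \<mu> F" and "convex K" and "x \<in> K" and "y \<in> K"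
    and min: "\<And>z. z \<in> K \<Longrightarrow> F x \<le> F z"
  shows "\<mu> / 2 * (norm (y - x))\<^sup>2 \<le> F y - F x"
proof -
  let ?N = "(norm (y - x))\<^sup>2"
  have "\<mu> / 2 * (1 - a) * ?N \<le> F y - F x" if a: "0 < a" "a < 1" for a
  proof -
    have "(1 - a) *\<^sub>R x + a *\<^sub>R y \<in> K"
      using \<open>convex K\<close> \<open>x \<in> K\<close> \<open>y \<in> K\<close> a by (simp add: convex_alt)
    then have "F x \<le> (1 - a) * F x + a * F y - \<mu> / 2 * a * (1 - a) * ?N"
      using min F \<open>x \<in> K\<close> \<open>y \<in> K\<close> a unfolding strongly_convex_on_def
      by (meson order_trans less_imp_le)
    then have "a * (\<mu> / 2 * (1 - a) * ?N) \<le> a * (F y - F x)"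
      by (simp add: algebra_simps)
    then show ?thesis
      using a by simp
  qed
  then have ev: "\<forall>\<^sub>F a in at_right 0. \<mu> / 2 * (1 - a) * ?N \<le> F y - F x"
    by (auto simp: eventually_at_right_field intro: exI[of _ 1])
  have lim: "((\<lambda>a. \<mu> / 2 * (1 - a) * ?N) \<longlongrightarrow> \<mu> / 2 * (1 - 0) * ?N) (at_right 0)"
    by (intro tendsto_intros)
  show ?thesis
    using tendsto_upperbound[OF lim ev] by simp
qed

section \<open>Follow the regularized leader\<close>

definition ftrl_objective ::
    "(nat \<Rightarrow> 'a \<Rightarrow> real) \<Rightarrow> (nat \<Rightarrow> real) \<Rightarrow> (nat \<Rightarrow> 'a::real_normed_vector) \<Rightarrow> nat \<Rightarrow> 'a \<Rightarrow> real" where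
  "ftrl_objective f \<sigma> x t y = (\<Sum>s=1..t. f s y + \<sigma> s / 2 * (norm (y - x s))\<^sup>2)"

locale ftrl =
  fixes K :: "'a::real_inner set" and f :: "nat \<Rightarrow> 'a \<Rightarrow> real" and G :: "nat \<Rightarrow> 'a"
    and \<sigma> :: "nat \<Rightarrow> real" and x :: "nat \<Rightarrow> 'a"
  assumes convex_domain: "convex K"
    and convex_loss: "\<And>t. t \<ge> 1 \<Longrightarrow> convex_on K (f t)"
    and subgradient: "\<And>t y. t \<ge> 1 \<Longrightarrow> y \<in> K \<Longrightarrow> f t (x t) + G t \<bullet> (y - x t) \<le> f t y"
    and weight_nonneg: "\<And>t. t \<ge> 1 \<Longrightarrow> 0 \<le> \<sigma> t"
    and first_weight_pos: "0 < \<sigma> 1"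
    and start: "x 1 \<in> K"
    and leader: "\<And>t. t \<ge> 1 \<Longrightarrow> x (t + 1) \<in> K \<and>
                   (\<forall>y\<in>K. ftrl_objective f \<sigma> x t (x (t + 1)) \<le> ftrl_objective f \<sigma> x t y)"
begin

lemma iterate_in_domain: "t \<ge> 1 \<Longrightarrow> x t \<in> K"
  using start leader[of "t - 1"] by (cases "t = 1") auto

lemma weight_sum_pos: "t \<ge> 1 \<Longrightarrow> 0 < sum \<sigma> {1..t}"
  using first_weight_pos sum_nonneg[of "{2..t}" \<sigma>] weight_nonneg
  by (simp add: sum.atLeast_Suc_atMost numeral_2_eq_2 add_pos_nonneg)

lemma objective_Suc:
  "ftrl_objective f \<sigma> x (Suc t) y
     = ftrl_objective f \<sigma> x t y + f (Suc t) y + \<sigma> (Suc t) / 2 * (norm (y - x (Suc t)))\<^sup>2"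
  by (simp add: ftrl_objective_def)

lemma objective_strongly_convex: "strongly_convex_on K (sum \<sigma> {1..t}) (ftrl_objective f \<sigma> x t)"
proof -
  have summand: "strongly_convex_on K (\<sigma> s) (\<lambda>y. f s y + \<sigma> s / 2 * (norm (y - x s))\<^sup>2)"
    if "s \<in> {1..t}" for s
    using strongly_convex_on_add[OF convex_on_imp_strongly_convex_on_zero strongly_convex_on_scaled_sq_dist,
        of K "f s" "\<sigma> s" "x s"] convex_loss that by simp
  show ?thesis
    using strongly_convex_on_sum[of "{1..t}" K \<sigma> "\<lambda>s y. f s y + \<sigma> s / 2 * (norm (y - x s))\<^sup>2"] summand
    unfolding ftrl_objective_def by simp
qed

lemma leader_gap:
  assumes "t \<ge> 1" and "y \<in> K"
  shows "sum \<sigma> {1..t} / 2 * (norm (y - x (t + 1)))\<^sup>2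
           \<le> ftrl_objective f \<sigma> x t y - ftrl_objective f \<sigma> x t (x (t + 1))"
  using leader[OF assms(1)] assms(2)
  by (intro strongly_convex_on_min_gap[OF objective_strongly_convex convex_domain]) auto

lemma step_bounds:
  assumes "t \<ge> 1"
  defines "e \<equiv> norm (x (t + 1) - x t)" and "S \<equiv> sum \<sigma> {1..t}"
  shows "S * e\<^sup>2 \<le> norm (G t) * e"
    and "ftrl_objective f \<sigma> x t (x t) - ftrl_objective f \<sigma> x t (x (t + 1)) \<le> norm (G t) * e - S / 2 * e\<^sup>2"
proof -
  obtain k where t: "t = Suc k"
    using assms(1) by (cases t) auto
  have next_in: "x (t + 1) \<in> K"
    using iterate_in_domain by simp
  \<comment> \<open>\<open>x t\<close> minimises the objective of round \<open>k\<close>; for \<open>k = 0\<close> that objective is \<open>0\<close>.\<close>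
  have previous: "sum \<sigma> {1..k} / 2 * e\<^sup>2
      \<le> ftrl_objective f \<sigma> x k (x (t + 1)) - ftrl_objective f \<sigma> x k (x t)"
  proof (cases "k = 0")
    case True
    then show ?thesis
      by (simp add: ftrl_objective_def)
  next
    case False
    then show ?thesis
      using leader_gap[of k "x (t + 1)"] next_in by (simp add: t e_def)
  qed
  have linear: "f t (x t) - f t (x (t + 1)) \<le> norm (G t) * e"
    using subgradient[OF assms(1) next_in] Cauchy_Schwarz_ineq2[of "G t" "x (t + 1) - x t"]
    unfolding e_def by linarith
  have at_t: "ftrl_objective f \<sigma> x t (x t) = ftrl_objective f \<sigma> x k (x t) + f t (x t)"
    using objective_Suc[of k "x t"] by (simp add: t)
  have at_next: "ftrl_objective f \<sigma> x t (x (t + 1))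
      = ftrl_objective f \<sigma> x k (x (t + 1)) + f t (x (t + 1)) + \<sigma> t / 2 * e\<^sup>2"
    using objective_Suc[of k "x (t + 1)"] by (simp add: t e_def)
  have "S / 2 * e\<^sup>2 = sum \<sigma> {1..k} / 2 * e\<^sup>2 + \<sigma> t / 2 * e\<^sup>2"
    by (simp add: S_def t field_simps)
  then show upper: "ftrl_objective f \<sigma> x t (x t) - ftrl_objective f \<sigma> x t (x (t + 1))
      \<le> norm (G t) * e - S / 2 * e\<^sup>2"
    using previous linear at_t at_next by linarith
  have "S / 2 * e\<^sup>2 \<le> ftrl_objective f \<sigma> x t (x t) - ftrl_objective f \<sigma> x t (x (t + 1))"
    using leader_gap[OF assms(1) iterate_in_domain[OF assms(1)]]
    by (simp add: S_def e_def norm_minus_commute)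
  with upper show "S * e\<^sup>2 \<le> norm (G t) * e"
    by linarith
qed

lemma stability:
  assumes "t \<ge> 1"
  shows "norm (x (t + 1) - x t) \<le> norm (G t) / sum \<sigma> {1..t}"
proof -
  let ?e = "norm (x (t + 1) - x t)" and ?S = "sum \<sigma> {1..t}"
  have "?S * ?e \<le> norm (G t)"
  proof (cases "?e = 0")
    case False
    then have "(?S * ?e) * ?e \<le> norm (G t) * ?e"
      using step_bounds(1)[OF assms] by (simp add: power2_eq_square mult.assoc)
    then show ?thesis
      using False by simp
  qed simp
  then show ?thesis
    using weight_sum_pos[OF assms] by (simp add: pos_le_divide_eq mult.commute)
qed

lemma objective_decrease:
  assumes "t \<ge> 1"
  shows "ftrl_objective f \<sigma> x t (x t) - ftrl_objective f \<sigma> x t (x (t + 1))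
           \<le> (norm (G t))\<^sup>2 / (2 * sum \<sigma> {1..t})"
proof -
  let ?e = "norm (x (t + 1) - x t)" and ?S = "sum \<sigma> {1..t}"
  have "2 * ?S * (norm (G t) * ?e - ?S / 2 * ?e\<^sup>2) \<le> (norm (G t))\<^sup>2"
    using zero_le_power2[of "norm (G t) - ?S * ?e"] by (simp add: power2_eq_square algebra_simps)
  then have "norm (G t) * ?e - ?S / 2 * ?e\<^sup>2 \<le> (norm (G t))\<^sup>2 / (2 * ?S)"
    using weight_sum_pos[OF assms] by (simp add: pos_le_divide_eq mult.commute)
  then show ?thesis
    using step_bounds(2)[OF assms] by linarith
qed

lemma sum_loss_eq:
  "(\<Sum>t=1..T. f t (x t))
     = (\<Sum>t=1..T. ftrl_objective f \<sigma> x t (x t) - ftrl_objective f \<sigma> x t (x (t + 1)))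
       + ftrl_objective f \<sigma> x T (x (T + 1))"
  by (induction T) (simp_all add: objective_Suc ftrl_objective_def[of _ _ _ 0])

lemma regret_bound:
  assumes "u \<in> K" and diameter: "\<And>y z. y \<in> K \<Longrightarrow> z \<in> K \<Longrightarrow> norm (y - z) \<le> D"
  shows "(\<Sum>t=1..T. f t (x t)) - (\<Sum>t=1..T. f t u)
           \<le> (\<Sum>t=1..T. (norm (G t))\<^sup>2 / (2 * sum \<sigma> {1..t})) + sum \<sigma> {1..T} / 2 * D\<^sup>2"
proof (cases "T = 0")
  case False
  have "(\<Sum>s=1..T. \<sigma> s / 2 * (norm (u - x s))\<^sup>2) \<le> (\<Sum>s=1..T. \<sigma> s / 2 * D\<^sup>2)"
    using diameter[OF assms(1) iterate_in_domain] weight_nonneg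
    by (intro sum_mono mult_left_mono power_mono) auto
  then have "ftrl_objective f \<sigma> x T u \<le> (\<Sum>t=1..T. f t u) + sum \<sigma> {1..T} / 2 * D\<^sup>2"
    by (simp add: ftrl_objective_def sum.distrib sum_distrib_right sum_divide_distrib)
  moreover have "ftrl_objective f \<sigma> x T (x (T + 1)) \<le> ftrl_objective f \<sigma> x T u"
    using leader[of T] assms(1) False by simp
  moreover have "(\<Sum>t=1..T. ftrl_objective f \<sigma> x t (x t) - ftrl_objective f \<sigma> x t (x (t + 1)))
      \<le> (\<Sum>t=1..T. (norm (G t))\<^sup>2 / (2 * sum \<sigma> {1..t}))"
    by (intro sum_mono objective_decrease) simp
  ultimately show ?thesis
    using sum_loss_eq[of T] by linarith
qed simp

end

lemma divide_sqrt_le_sqrt_diff: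
  fixes H h :: real
  assumes "0 \<le> H" and "0 \<le> h"
  shows "h / sqrt (H + h) \<le> 2 * (sqrt (H + h) - sqrt H)"
proof (cases "H + h = 0")
  case False
  then have "0 < sqrt (H + h)"
    using assms by simp
  have "h = (sqrt (H + h) - sqrt H) * (sqrt (H + h) + sqrt H)"
    using assms by (simp add: algebra_simps flip: power2_eq_square)
  also have "\<dots> \<le> (sqrt (H + h) - sqrt H) * (2 * sqrt (H + h))"
    using assms by (intro mult_left_mono) auto
  finally have "h \<le> 2 * (sqrt (H + h) - sqrt H) * sqrt (H + h)"
    by (simp add: algebra_simps)
  then show ?thesis
    using \<open>0 < sqrt (H + h)\<close> by (rule pos_divide_le_eq[THEN iffD2, rotated])
qed (use assms in simp)

lemma sum_divide_sqrt_partial_sum_le: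
  fixes h :: "nat \<Rightarrow> real"
  assumes "\<And>t. t \<ge> 1 \<Longrightarrow> 0 \<le> h t"
  shows "(\<Sum>t=1..n. h t / sqrt (sum h {1..t})) \<le> 2 * sqrt (sum h {1..n})"
proof (induction n)
  case (Suc n)
  have "0 \<le> sum h {1..n}"
    using assms by (intro sum_nonneg) auto
  then have "h (Suc n) / sqrt (sum h {1..n} + h (Suc n))
      \<le> 2 * (sqrt (sum h {1..n} + h (Suc n)) - sqrt (sum h {1..n}))"
    using assms by (intro divide_sqrt_le_sqrt_diff) auto
  then show ?case
    using Suc by (simp add: algebra_simps)
qed simp

text \<open>This also gives \<open>\<sigma>0 * sqrt (h 1)\<close> at \<open>t = 1\<close>, the sum over \<open>{1..0}\<close> being empty.\<close>

definition adaptive_weight :: "real \<Rightarrow> (nat \<Rightarrow> real) \<Rightarrow> nat \<Rightarrow> real" where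
  "adaptive_weight \<sigma>0 h t = \<sigma>0 * (sqrt (sum h {1..t}) - sqrt (sum h {1..t - 1}))"

lemma sum_adaptive_weight: "sum (adaptive_weight \<sigma>0 h) {1..t} = \<sigma>0 * sqrt (sum h {1..t})"
  by (induction t) (simp_all add: adaptive_weight_def algebra_simps)

lemma adaptive_weight_nonneg:
  assumes "0 \<le> \<sigma>0" and "\<And>t. t \<ge> 1 \<Longrightarrow> 0 \<le> h t"
  shows "0 \<le> adaptive_weight \<sigma>0 h t"
proof -
  have "sum h {1..t - 1} \<le> sum h {1..t}"
    using assms(2) by (intro sum_mono2) auto
  then show ?thesis
    using assms(1) by (simp add: adaptive_weight_def)
qed

locale adaptive_ftrl = ftrl K f G "adaptive_weight \<sigma>0 h" x
  for K :: "'a::real_inner set" and f G \<sigma>0 h x +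
  assumes grad_le: "\<And>t. t \<ge> 1 \<Longrightarrow> norm (G t) \<le> h t"
    and grad_sq_le: "\<And>t. t \<ge> 1 \<Longrightarrow> (norm (G t))\<^sup>2 \<le> h t"
begin

lemma h_nonneg: "t \<ge> 1 \<Longrightarrow> 0 \<le> h t"
  using grad_le norm_ge_zero order_trans by blast

lemma base_rate_pos: "0 < \<sigma>0"
  using first_weight_pos h_nonneg[of 1] by (simp add: adaptive_weight_def zero_less_mult_iff)

lemma rate_pos: "t \<ge> 1 \<Longrightarrow> 0 < \<sigma>0 * sqrt (sum h {1..t})"
  using weight_sum_pos unfolding sum_adaptive_weight .

lemma path_length:
  "(\<Sum>t=1..T. norm (x (t + 1) - x t)) \<le> 2 / \<sigma>0 * sqrt (sum h {1..T})"
proof -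
  have "norm (x (t + 1) - x t) \<le> h t / sqrt (sum h {1..t}) / \<sigma>0" if "t \<in> {1..T}" for t
  proof -
    have "norm (x (t + 1) - x t) \<le> norm (G t) / (\<sigma>0 * sqrt (sum h {1..t}))"
      using stability that unfolding sum_adaptive_weight by simp
    also have "\<dots> \<le> h t / (\<sigma>0 * sqrt (sum h {1..t}))"
      using grad_le[of t] less_imp_le[OF rate_pos[of t]] that by (intro divide_right_mono) auto
    finally show ?thesis
      by (simp add: mult.commute)
  qed
  then have "(\<Sum>t=1..T. norm (x (t + 1) - x t)) \<le> (\<Sum>t=1..T. h t / sqrt (sum h {1..t})) / \<sigma>0"
    unfolding sum_divide_distrib by (rule sum_mono)
  also have "\<dots> \<le> 2 * sqrt (sum h {1..T}) / \<sigma>0"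
    using base_rate_pos h_nonneg by (intro divide_right_mono sum_divide_sqrt_partial_sum_le) auto
  finally show ?thesis
    by simp
qed

lemma adaptive_regret_bound:
  assumes "u \<in> K" and "\<And>y z. y \<in> K \<Longrightarrow> z \<in> K \<Longrightarrow> norm (y - z) \<le> D"
  shows "(\<Sum>t=1..T. f t (x t)) - (\<Sum>t=1..T. f t u) \<le> (1 / \<sigma>0 + \<sigma>0 * D\<^sup>2 / 2) * sqrt (sum h {1..T})"
proof -
  have "(norm (G t))\<^sup>2 / (2 * sum (adaptive_weight \<sigma>0 h) {1..t}) \<le> h t / sqrt (sum h {1..t}) / (2 * \<sigma>0)"
    if "t \<in> {1..T}" for t
  proof -
    have "(norm (G t))\<^sup>2 / (2 * (\<sigma>0 * sqrt (sum h {1..t}))) \<le> h t / (2 * (\<sigma>0 * sqrt (sum h {1..t})))"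
      using grad_sq_le[of t] less_imp_le[OF rate_pos[of t]] that by (intro divide_right_mono) auto
    then show ?thesis
      unfolding sum_adaptive_weight by (simp add: mult.commute mult.left_commute)
  qed
  then have "(\<Sum>t=1..T. (norm (G t))\<^sup>2 / (2 * sum (adaptive_weight \<sigma>0 h) {1..t}))
      \<le> (\<Sum>t=1..T. h t / sqrt (sum h {1..t})) / (2 * \<sigma>0)"
    unfolding sum_divide_distrib by (rule sum_mono)
  also have "\<dots> \<le> 2 * sqrt (sum h {1..T}) / (2 * \<sigma>0)"
    using base_rate_pos h_nonneg by (intro divide_right_mono sum_divide_sqrt_partial_sum_le) auto
  moreover have "2 * sqrt (sum h {1..T}) / (2 * \<sigma>0) + \<sigma>0 * sqrt (sum h {1..T}) / 2 * D\<^sup>2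
      = (1 / \<sigma>0 + \<sigma>0 * D\<^sup>2 / 2) * sqrt (sum h {1..T})"
    using base_rate_pos by (simp add: field_simps)
  ultimately show ?thesis
    using regret_bound[OF assms, of T] unfolding sum_adaptive_weight by linarith
qed

end

lemma adaptive_ftrlI:
  assumes "convex K" and "\<And>t. t \<ge> 1 \<Longrightarrow> convex_on K (f t)"
    and "\<And>t y. t \<ge> 1 \<Longrightarrow> y \<in> K \<Longrightarrow> f t (x t) + G t \<bullet> (y - x t) \<le> f t y"
    and "x 1 \<in> K"
    and "\<And>t. t \<ge> 1 \<Longrightarrow> x (t + 1) \<in> K \<and> (\<forall>y\<in>K.
           ftrl_objective f (adaptive_weight \<sigma>0 h) x t (x (t + 1)) \<le> ftrl_objective f (adaptive_weight \<sigma>0 h) x t y)"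
    and "0 < \<sigma>0" and "0 < h 1"
    and grad_le: "\<And>t. t \<ge> 1 \<Longrightarrow> norm (G t) \<le> h t"
    and "\<And>t. t \<ge> 1 \<Longrightarrow> (norm (G t))\<^sup>2 \<le> h t"
  shows "adaptive_ftrl K f G \<sigma>0 h x"
proof unfold_locales
  have "0 \<le> h t" if "t \<ge> 1" for t
    using grad_le[OF that] norm_ge_zero order_trans by blast
  then show "\<And>t. t \<ge> 1 \<Longrightarrow> 0 \<le> adaptive_weight \<sigma>0 h t"
    using \<open>0 < \<sigma>0\<close> by (intro adaptive_weight_nonneg) auto
  show "0 < adaptive_weight \<sigma>0 h 1"
    using \<open>0 < \<sigma>0\<close> \<open>0 < h 1\<close> by (simp add: adaptive_weight_def)
qed (use assms in auto)

section \<open>The controlled linear system\<close>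

lemma norm_matrix_vector_mult_le:
  fixes B :: "real^'n^'m"
  shows "norm (B *v v) \<le> norm B * norm v"
proof -
  have "norm (B *v v) \<le> norm (\<chi> i. norm (B $ i) * norm v)"
  proof (rule norm_le_componentwise_cart)
    fix i
    have "norm ((B *v v) $ i) = \<bar>B $ i \<bullet> v\<bar>"
      by (simp add: matrix_vector_mul_component)
    also have "\<dots> \<le> norm (B $ i) * norm v"
      by (rule Cauchy_Schwarz_ineq2)
    finally show "norm ((B *v v) $ i) \<le> norm ((\<chi> i. norm (B $ i) * norm v) $ i)"
      by simp
  qed
  also have "(\<chi> i. norm (B $ i) * norm v) = norm v *\<^sub>R (\<chi> i. norm (B $ i))"
    by (simp add: vec_eq_iff)
  also have "norm (norm v *\<^sub>R (\<chi> i. norm (B $ i))) = norm v * norm (\<chi> i. norm (B $ i))"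
    by simp
  also have "norm (\<chi> i. norm (B $ i)) = norm B"
    by (simp add: norm_vec_def)
  finally show ?thesis
    by (simp add: mult.commute)
qed

lemma norm_le_sum_norm_cart: "norm (x :: 'a::real_normed_vector^'n) \<le> (\<Sum>i\<in>UNIV. norm (x $ i))"
  by (simp add: norm_vec_def L2_set_le_sum)

lemma in_Mset_imp_norm_le: "M \<in> Mset \<kappa> \<Longrightarrow> norm M \<le> \<kappa>"
  unfolding Mset_def using norm_le_sum_norm_cart[of M] by simp

lemma convex_Mset: "convex (Mset \<kappa>)"
  unfolding convex_alt
proof (intro ballI allI impI)
  fix M M' :: "real^'dx^'du^'p" and a :: real
  assume M: "M \<in> Mset \<kappa>" "M' \<in> Mset \<kappa>" and a: "0 \<le> a \<and> a \<le> 1"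
  have "(\<Sum>j\<in>UNIV. norm (((1 - a) *\<^sub>R M + a *\<^sub>R M') $ j))
      \<le> (\<Sum>j\<in>UNIV. (1 - a) * norm (M $ j) + a * norm (M' $ j))"
    using a by (intro sum_mono) (simp add: norm_triangle_le)
  also have "\<dots> = (1 - a) * (\<Sum>j\<in>UNIV. norm (M $ j)) + a * (\<Sum>j\<in>UNIV. norm (M' $ j))"
    by (simp add: sum.distrib sum_distrib_left)
  also have "\<dots> \<le> (1 - a) * \<kappa> + a * \<kappa>"
    using M a unfolding Mset_def by (intro add_mono mult_left_mono) auto
  finally show "(1 - a) *\<^sub>R M + a *\<^sub>R M' \<in> Mset \<kappa>"
    unfolding Mset_def by (simp add: algebra_simps)
qed

lemma dac_convex_combination:
  "dac lag ((1 - a) *\<^sub>R M + a *\<^sub>R M') w t = (1 - a) *\<^sub>R dac lag M w t + a *\<^sub>R dac lag M' w t"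
  unfolding dac_def
  by (simp add: matrix_vector_mult_add_rdistrib scaleR_matrix_vector_assoc sum.distrib scaleR_sum_right)

lemma norm_dac_diff_le:
  fixes M M' :: "real^'dx^'du^'p::finite"
  assumes w: "\<And>t. norm (w t) \<le> wb"
  shows "norm (dac lag M w t - dac lag M' w t) \<le> real CARD('p) * wb * norm (M - M')"
proof -
  have "dac lag M w t - dac lag M' w t = (\<Sum>j\<in>UNIV. (M - M') $ j *v w (t - lag j))"
    by (simp add: dac_def matrix_vector_mult_diff_rdistrib sum_subtractf)
  also have "norm \<dots> \<le> (\<Sum>j\<in>UNIV. norm ((M - M') $ j) * norm (w (t - lag j)))"
    by (intro norm_sum[THEN order_trans] sum_mono norm_matrix_vector_mult_le)
  also have "\<dots> \<le> (\<Sum>j\<in>(UNIV :: 'p set). norm (M - M') * wb)"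
    using w Finite_Cartesian_Product.norm_nth_le[of "M - M'"] by (intro sum_mono mult_mono) auto
  finally show ?thesis
    by (simp add: algebra_simps)
qed

lemma traj_convex_combination:
  "traj A B w (\<lambda>s. (1 - a) *\<^sub>R u s + a *\<^sub>R u' s) t
     = (1 - a) *\<^sub>R traj A B w u t + a *\<^sub>R traj A B w u' t"
proof (induction t)
  case (Suc t)
  have "(1 - a) *\<^sub>R (A *v traj A B w u t + B *v u t + w t) + a *\<^sub>R (A *v traj A B w u' t + B *v u' t + w t)
      = A *v ((1 - a) *\<^sub>R traj A B w u t + a *\<^sub>R traj A B w u' t)
        + B *v ((1 - a) *\<^sub>R u t + a *\<^sub>R u' t) + w t"
    by (simp add: algebra_simps)
  then show ?case
    using Suc by simp
qed simp

lemma norm_traj_Suc_diff_le: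
  "norm (traj A B w u (Suc t) - traj A B w u' (Suc t))
     \<le> onorm (\<lambda>x. A *v x) * norm (traj A B w u t - traj A B w u' t) + norm B * norm (u t - u' t)"
proof (cases "t = 0")
  case True
  then show ?thesis
    using onorm_pos_le[of "\<lambda>x. A *v x"] by simp
next
  case False
  then have "traj A B w u (Suc t) - traj A B w u' (Suc t)
      = A *v (traj A B w u t - traj A B w u' t) + B *v (u t - u' t)"
    by (simp add: algebra_simps)
  also have "norm \<dots> \<le> onorm (\<lambda>x. A *v x) * norm (traj A B w u t - traj A B w u' t)
                       + norm B * norm (u t - u' t)"
    by (intro norm_triangle_le add_mono onorm norm_matrix_vector_mult_le) simp
  finally show ?thesis .
qed

lemma fcost_convex:
  fixes lag :: "'p::finite \<Rightarrow> nat"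
  assumes "convex_on UNIV (\<lambda>(x, u). c t x u)"
  shows "convex_on UNIV (fcost c A B lag w t)"
proof (rule convex_onI)
  fix a :: real and M M'
  assume "0 < a" "a < 1"
  have "xM A B lag w ((1 - a) *\<^sub>R M + a *\<^sub>R M') t
      = (1 - a) *\<^sub>R xM A B lag w M t + a *\<^sub>R xM A B lag w M' t"
    unfolding xM_def dac_convex_combination by (rule traj_convex_combination)
  then have "fcost c A B lag w t ((1 - a) *\<^sub>R M + a *\<^sub>R M')
      = (\<lambda>(x, u). c t x u) ((1 - a) *\<^sub>R (xM A B lag w M t, dac lag M w t)
                           + a *\<^sub>R (xM A B lag w M' t, dac lag M' w t))"
    by (simp add: fcost_def dac_convex_combination)
  also have "\<dots> \<le> (1 - a) * fcost c A B lag w t M + a * fcost c A B lag w t M'"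
    using convex_onD[OF assms, of a "(xM A B lag w M t, dac lag M w t)" "(xM A B lag w M' t, dac lag M' w t)"]
      \<open>0 < a\<close> \<open>a < 1\<close>
    by (simp add: fcost_def)
  finally show "fcost c A B lag w t ((1 - a) *\<^sub>R M + a *\<^sub>R M')
      \<le> (1 - a) * fcost c A B lag w t M + a * fcost c A B lag w t M'" .
qed simp

lemma norm_xM_diff_le:
  fixes M M' :: "real^'dx^'du^'p::finite"
  assumes \<delta>: "0 < \<delta>" and A: "onorm (\<lambda>x. A *v x) \<le> 1 - \<delta>" and B: "norm B \<le> \<kappa>B"
    and w: "\<And>t. norm (w t) \<le> wb"
  shows "norm (xM A B lag w M t - xM A B lag w M' t) \<le> real CARD('p) * wb * \<kappa>B / \<delta> * norm (M - M')"
proof (induction t)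
  case 0
  have "0 \<le> wb" "0 \<le> \<kappa>B"
    using w[of 0] B norm_ge_zero order_trans by blast+
  then show ?case
    using \<delta> by (simp add: xM_def)
next
  case (Suc t)
  let ?K = "real CARD('p) * wb * \<kappa>B"
  have "norm (xM A B lag w M (Suc t) - xM A B lag w M' (Suc t))
      \<le> onorm (\<lambda>x. A *v x) * norm (xM A B lag w M t - xM A B lag w M' t)
        + norm B * norm (dac lag M w t - dac lag M' w t)"
    unfolding xM_def by (rule norm_traj_Suc_diff_le)
  also have "\<dots> \<le> (1 - \<delta>) * (?K / \<delta> * norm (M - M')) + \<kappa>B * (real CARD('p) * wb * norm (M - M'))"
    using Suc A B norm_dac_diff_le[OF w] onorm_pos_le[of "\<lambda>x. A *v x"]
    by (intro add_mono mult_mono) (auto intro: order_trans[OF norm_ge_zero])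
  also have "\<dots> = ?K / \<delta> * norm (M - M')"
    using \<delta> by (simp add: field_simps)
  finally show ?case .
qed

lemma sum_le_of_contraction:
  fixes E b :: "nat \<Rightarrow> real"
  assumes \<delta>: "0 < \<delta>" and "E 1 = 0" and "\<And>t. 0 \<le> E t"
    and step: "\<And>t. t \<ge> 1 \<Longrightarrow> E (Suc t) \<le> (1 - \<delta>) * E t + b t"
  shows "(\<Sum>t=1..n. E t) \<le> (\<Sum>t=1..n. b t) / \<delta>"
proof -
  have "\<delta> * (\<Sum>t=1..n. E t) + E (Suc n) \<le> (\<Sum>t=1..n. b t)"
  proof (induction n)
    case (Suc n)
    then show ?case
      using step[of "Suc n"] by (simp add: algebra_simps)
  qed (use \<open>E 1 = 0\<close> in simp)
  then show ?thesis
    using \<delta> \<open>0 \<le> E (Suc n)\<close> by (simp add: field_simps)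
qed

lemma sum_norm_traj_xM_diff_le:
  fixes Ms :: "nat \<Rightarrow> real^'dx^'du^'p::finite"
  assumes \<delta>: "0 < \<delta>" and A: "onorm (\<lambda>x. A *v x) \<le> 1 - \<delta>" and B: "norm B \<le> \<kappa>B"
    and w: "\<And>t. norm (w t) \<le> wb"
  shows "(\<Sum>t=1..T. norm (traj A B w (\<lambda>s. dac lag (Ms s) w s) t - xM A B lag w (Ms t) t))
    \<le> real CARD('p) * wb * \<kappa>B / \<delta>\<^sup>2 * (\<Sum>t=1..T. norm (Ms (t + 1) - Ms t))"
proof -
  let ?K = "real CARD('p) * wb * \<kappa>B"
  define x where "x = traj A B w (\<lambda>s. dac lag (Ms s) w s)"
  define E where "E t = norm (x t - xM A B lag w (Ms t) t)" for t
  have "E (Suc t) \<le> (1 - \<delta>) * E t + ?K / \<delta> * norm (Ms (t + 1) - Ms t)" for t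
  proof -
    \<comment> \<open>Pass through the state \<open>Ms t\<close> would have reached; it plays the same action at step \<open>t\<close>.\<close>
    have "norm (x (Suc t) - xM A B lag w (Ms t) (Suc t)) \<le> onorm (\<lambda>x. A *v x) * E t"
      using norm_traj_Suc_diff_le[of A B w "\<lambda>s. dac lag (Ms s) w s" t "dac lag (Ms t) w"]
      unfolding x_def E_def xM_def by (simp del: traj.simps)
    also have "\<dots> \<le> (1 - \<delta>) * E t"
      by (rule mult_right_mono[OF A]) (simp add: E_def)
    finally have "norm (x (Suc t) - xM A B lag w (Ms t) (Suc t)) \<le> (1 - \<delta>) * E t" .
    moreover have "norm (xM A B lag w (Ms t) (Suc t) - xM A B lag w (Ms (Suc t)) (Suc t))
        \<le> ?K / \<delta> * norm (Ms (t + 1) - Ms t)"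
      using norm_xM_diff_le[OF \<delta> A B w] by (simp add: norm_minus_commute)
    ultimately show ?thesis
      unfolding E_def by (rule norm_diff_triangle_le)
  qed
  moreover have "E 1 = 0"
    by (simp add: E_def x_def xM_def)
  ultimately have "(\<Sum>t=1..T. E t) \<le> (\<Sum>t=1..T. ?K / \<delta> * norm (Ms (t + 1) - Ms t)) / \<delta>"
    by (intro sum_le_of_contraction[OF \<delta>]) (simp_all add: E_def)
  also have "\<dots> = ?K / \<delta>\<^sup>2 * (\<Sum>t=1..T. norm (Ms (t + 1) - Ms t))"
    unfolding sum_distrib_left[symmetric] by (simp add: power2_eq_square)
  finally show ?thesis
    by (simp add: E_def x_def)
qed

lemma sum_cost_traj_le_sum_fcost:
  fixes Ms :: "nat \<Rightarrow> real^'dx^'du^'p::finite"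
  assumes \<delta>: "0 < \<delta>" and A: "onorm (\<lambda>x. A *v x) \<le> 1 - \<delta>" and B: "norm B \<le> \<kappa>B"
    and w: "\<And>t. norm (w t) \<le> wb"
    and lipschitz: "\<And>t. t \<ge> 1 \<Longrightarrow> l-lipschitz_on UNIV (\<lambda>(x, u). c t x u)"
  shows "(\<Sum>t=1..T. c t (traj A B w (\<lambda>s. dac lag (Ms s) w s) t) (dac lag (Ms t) w t))
           - (\<Sum>t=1..T. fcost c A B lag w t (Ms t))
         \<le> l * (real CARD('p) * wb * \<kappa>B / \<delta>\<^sup>2) * (\<Sum>t=1..T. norm (Ms (t + 1) - Ms t))"
proof -
  define x where "x = traj A B w (\<lambda>s. dac lag (Ms s) w s)"
  have l: "0 \<le> l"
    using lipschitz[of 1] by (simp add: lipschitz_on_def)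
  have pointwise: "c t (x t) (dac lag (Ms t) w t) - fcost c A B lag w t (Ms t)
      \<le> l * norm (x t - xM A B lag w (Ms t) t)" if "t \<in> {1..T}" for t
    using lipschitz_onD[OF lipschitz, of t "(x t, dac lag (Ms t) w t)" "(xM A B lag w (Ms t) t, dac lag (Ms t) w t)"] that
    by (simp add: fcost_def dist_Pair_Pair dist_real_def dist_norm)
  have "(\<Sum>t=1..T. c t (x t) (dac lag (Ms t) w t)) - (\<Sum>t=1..T. fcost c A B lag w t (Ms t))
      \<le> l * (\<Sum>t=1..T. norm (x t - xM A B lag w (Ms t) t))"
    unfolding sum_subtractf[symmetric] sum_distrib_left by (rule sum_mono) (rule pointwise)
  also have "\<dots> \<le> l * (real CARD('p) * wb * \<kappa>B / \<delta>\<^sup>2 * (\<Sum>t=1..T. norm (Ms (t + 1) - Ms t)))"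
    unfolding x_def by (intro mult_left_mono[OF sum_norm_traj_xM_diff_le[OF \<delta> A B w] l])
  finally show ?thesis
    by (simp add: x_def mult.assoc)
qed

section \<open>Regret of the FTRL controller\<close>

lemma ftrl_controller_regret:
  fixes A :: "real^'dx^'dx" and B :: "real^'du^'dx" and lag :: "'p::finite \<Rightarrow> nat"
    and Ms :: "nat \<Rightarrow> real^'dx^'du^'p"
  assumes ftrl: "adaptive_ftrl (Mset \<kappa>M) (fcost c A B lag w) G \<sigma>0 h Ms"
    and \<delta>: "0 < \<delta>" and A: "onorm (\<lambda>x. A *v x) \<le> 1 - \<delta>" and B: "norm B \<le> \<kappa>B"
    and w: "\<And>t. norm (w t) \<le> wb"
    and lipschitz: "\<And>t. t \<ge> 1 \<Longrightarrow> l-lipschitz_on UNIV (\<lambda>(x, u). c t x u)"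
    and "Mstar \<in> Mset \<kappa>M"
  defines "K \<equiv> real CARD('p) * wb * \<kappa>B"
  shows "(\<Sum>t=1..T. c t (traj A B w (\<lambda>s. dac lag (Ms s) w s) t) (dac lag (Ms t) w t))
           - (\<Sum>t=1..T. fcost c A B lag w t Mstar)
         \<le> ((1 + 2 * l * K / \<delta>\<^sup>2) / \<sigma>0 + 2 * \<sigma>0 * \<kappa>M\<^sup>2) * sqrt (sum h {1..T})"
proof -
  interpret adaptive_ftrl "Mset \<kappa>M" "fcost c A B lag w" G \<sigma>0 h Ms
    by (fact ftrl)
  let ?path = "\<Sum>t=1..T. norm (Ms (t + 1) - Ms t)"
  have "0 \<le> l"
    using lipschitz[of 1] by (simp add: lipschitz_on_def)
  moreover have "0 \<le> K"
    using order_trans[OF norm_ge_zero w[of 0]] order_trans[OF norm_ge_zero B] by (simp add: K_def)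
  ultimately have "l * (K / \<delta>\<^sup>2) * ?path \<le> l * (K / \<delta>\<^sup>2) * (2 / \<sigma>0 * sqrt (sum h {1..T}))"
    by (intro mult_left_mono path_length) simp
  moreover have "norm (M - M') \<le> 2 * \<kappa>M" if "M \<in> Mset \<kappa>M" "M' \<in> Mset \<kappa>M" for M M'
    using norm_triangle_ineq4[of M M'] in_Mset_imp_norm_le[OF that(1)] in_Mset_imp_norm_le[OF that(2)]
    by linarith
  then have "(\<Sum>t=1..T. fcost c A B lag w t (Ms t)) - (\<Sum>t=1..T. fcost c A B lag w t Mstar)
      \<le> (1 / \<sigma>0 + \<sigma>0 * (2 * \<kappa>M)\<^sup>2 / 2) * sqrt (sum h {1..T})"
    by (rule adaptive_regret_bound[OF \<open>Mstar \<in> Mset \<kappa>M\<close>])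
  moreover have "(\<Sum>t=1..T. c t (traj A B w (\<lambda>s. dac lag (Ms s) w s) t) (dac lag (Ms t) w t))
           - (\<Sum>t=1..T. fcost c A B lag w t (Ms t)) \<le> l * (K / \<delta>\<^sup>2) * ?path"
    using \<delta> A B w lipschitz unfolding K_def by (rule sum_cost_traj_le_sum_fcost)
  ultimately have "(\<Sum>t=1..T. c t (traj A B w (\<lambda>s. dac lag (Ms s) w s) t) (dac lag (Ms t) w t))
           - (\<Sum>t=1..T. fcost c A B lag w t Mstar)
      \<le> l * (K / \<delta>\<^sup>2) * (2 / \<sigma>0 * sqrt (sum h {1..T}))
        + (1 / \<sigma>0 + \<sigma>0 * (2 * \<kappa>M)\<^sup>2 / 2) * sqrt (sum h {1..T})"
    by linarith
  also have "\<dots> = ((1 + 2 * l * K / \<delta>\<^sup>2) / \<sigma>0 + 2 * \<sigma>0 * \<kappa>M\<^sup>2) * sqrt (sum h {1..T})"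
    using base_rate_pos by (simp add: field_simps power2_eq_square)
  finally show ?thesis .
qed

lemma tuned_rate_bound:
  fixes \<delta> \<kappa> a \<sigma> q :: real
  assumes "0 < \<delta>" and "0 < \<kappa>" and "0 < a" and \<sigma>: "\<sigma> = sqrt a / (sqrt 2 * \<kappa> * \<delta>)"
    and "q \<le> a / \<delta>\<^sup>2"
  shows "q / \<sigma> + 2 * \<sigma> * \<kappa>\<^sup>2 \<le> 2 * \<kappa> / \<delta> * sqrt (2 * a)"
proof -
  define r where "r = sqrt a"
  have r: "0 < r" "a = r\<^sup>2" "sqrt (2 * a) = sqrt 2 * r"
    using \<open>0 < a\<close> by (simp_all add: r_def real_sqrt_mult)
  have "0 < \<sigma>"
    using assms by simp
  then have "q / \<sigma> \<le> (a / \<delta>\<^sup>2) / \<sigma>"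
    using assms(5) by (intro divide_right_mono) auto
  \<comment> \<open>This \<open>\<sigma>\<close> makes both terms equal when \<open>q = a / \<delta>\<^sup>2\<close>.\<close>
  also have "(a / \<delta>\<^sup>2) / \<sigma> = sqrt 2 * \<kappa> * r / \<delta>"
    using assms r by (simp add: \<sigma> r_def[symmetric] field_simps power2_eq_square)
  finally have "q / \<sigma> \<le> sqrt 2 * \<kappa> * r / \<delta>" .
  moreover have "2 * \<sigma> * \<kappa>\<^sup>2 = sqrt 2 * \<kappa> * r / \<delta>"
  proof -
    have "sqrt 2 * sqrt 2 = (2::real)"
      by simp
    then show ?thesis
      using assms r by (simp add: \<sigma> r_def[symmetric] field_simps power2_eq_square)
  qed
  moreover have "2 * \<kappa> / \<delta> * sqrt (2 * a) = 2 * (sqrt 2 * \<kappa> * r / \<delta>)"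
    using r by simp
  ultimately show ?thesis
    by linarith
qed

theorem theorem1:
  fixes A :: "real^'dx^'dx" and B :: "real^'du^'dx"
    and lag :: "'p::finite \<Rightarrow> nat"
    and w :: "nat \<Rightarrow> real^'dx" and wb :: real
    and c :: "nat \<Rightarrow> real^'dx \<Rightarrow> real^'du \<Rightarrow> real"
    and \<delta> \<kappa>B \<kappa>M l :: real
    and Ms :: "nat \<Rightarrow> real^'dx^'du^'p"
    and G :: "nat \<Rightarrow> real^'dx^'du^'p"
    and T :: nat and Mstar :: "real^'dx^'du^'p"
  defines "f \<equiv> fcost c A B lag w"
    and "g \<equiv> (\<lambda>t. max (norm (G t)) ((norm (G t))\<^sup>2))"
  defines "h \<equiv> (\<lambda>t. Max (g ` {1..t}))"
  defines "H \<equiv> (\<lambda>t. \<Sum>s=1..t. h s)"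
  defines "z \<equiv> real CARD('p) * wb * sqrt (real CARD('du)) * \<kappa>B"
  defines "\<sigma> \<equiv> sqrt (\<delta>\<^sup>2 + 2 * l * z) / (sqrt 2 * \<kappa>M * \<delta>)"
  defines "\<sigma>s \<equiv> (\<lambda>t. \<sigma> * (sqrt (H t) - sqrt (H (t - 1))))"
  assumes lag: "bij_betw lag UNIV {1..CARD('p)}"
    and \<delta>: "0 < \<delta>" "\<delta> < 1"
    and A: "onorm (\<lambda>x. A *v x) = 1 - \<delta>"
    and B: "norm B \<le> \<kappa>B"
    and w0: "w 0 = 0"
    and wbound: "\<And>t. t \<ge> 1 \<Longrightarrow> norm (w t) \<le> wb"
    and convex: "\<And>t. t \<ge> 1 \<Longrightarrow> convex_on UNIV (\<lambda>(x, u). c t x u)"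
    and lipschitz: "\<And>t. t \<ge> 1 \<Longrightarrow> l-lipschitz_on UNIV (\<lambda>(x, u). c t x u)"
    and M1: "Ms 1 \<in> Mset \<kappa>M"
    and ftrl: "\<And>t. t \<ge> 1 \<Longrightarrow> Ms (t + 1) \<in> Mset \<kappa>M \<and>
        (\<forall>M \<in> Mset \<kappa>M. (\<Sum>s=1..t. f s (Ms (t + 1)) + \<sigma>s s / 2 * (norm (Ms (t + 1) - Ms s))\<^sup>2)
                      \<le> (\<Sum>s=1..t. f s M + \<sigma>s s / 2 * (norm (M - Ms s))\<^sup>2))"
    and subgrad: "\<And>t M. t \<ge> 1 \<Longrightarrow> f t M \<ge> f t (Ms t) + G t \<bullet> (M - Ms t)"
    and h1: "h 1 > 0"
    and T: "T \<ge> 1"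
    and Mstar: "Mstar \<in> Mset \<kappa>M" "\<forall>M \<in> Mset \<kappa>M. (\<Sum>t=1..T. f t Mstar) \<le> (\<Sum>t=1..T. f t M)"
  shows "(\<Sum>t=1..T. c t (traj A B w (\<lambda>s. dac lag (Ms s) w s) t) (dac lag (Ms t) w t))
           - (\<Sum>t=1..T. c t (xM A B lag w Mstar t) (dac lag Mstar w t))
         \<le> 2 * \<kappa>M / \<delta> * (sqrt (2 * (\<delta>\<^sup>2 + 2 * l * z)) + l * z / (\<delta> * sqrt (h 1))) * sqrt (H T)"
proof -
  \<comment> \<open>Not needed: \<open>lag\<close>, \<open>\<delta> < 1\<close>, \<open>T\<close>, and the minimality of \<open>Mstar\<close>; any comparator in \<open>Mset \<kappa>M\<close> will do.\<close>
  let ?actual = "\<Sum>t=1..T. c t (traj A B w (\<lambda>s. dac lag (Ms s) w s) t) (dac lag (Ms t) w t)"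
  define K where "K = real CARD('p) * wb * \<kappa>B"
  have wb: "0 \<le> wb"
    using wbound[of 1] norm_ge_zero[of "w 1"] by linarith
  have w: "norm (w t) \<le> wb" for t
    using wbound[of t] w0 wb by (cases "t = 0") auto
  have comparator: "(\<Sum>t=1..T. c t (xM A B lag w Mstar t) (dac lag Mstar w t)) = (\<Sum>t=1..T. f t Mstar)"
    by (simp add: f_def fcost_def)
  show ?thesis
  proof (cases "\<kappa>M = 0")
    case True
    \<comment> \<open>Here \<open>\<sigma> = 0\<close> by division by zero, but \<open>Mset \<kappa>M = {0}\<close>, so every \<open>Ms t\<close> equals \<open>Mstar\<close>.\<close>
    have "Ms t \<in> Mset \<kappa>M" if "t \<ge> 1" for t
      using M1 ftrl[of "t - 1"] that by (cases "t = 1") auto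
    then have "Ms t = Mstar" if "t \<ge> 1" for t
      using in_Mset_imp_norm_le that in_Mset_imp_norm_le[OF Mstar(1)] True by (metis norm_le_zero_iff)
    then have "(\<Sum>t=1..T. norm (Ms (t + 1) - Ms t)) = 0" and "(\<Sum>t=1..T. f t (Ms t)) = (\<Sum>t=1..T. f t Mstar)"
      by (auto intro: sum.neutral sum.cong)
    moreover have "?actual - (\<Sum>t=1..T. f t (Ms t)) \<le> l * (K / \<delta>\<^sup>2) * (\<Sum>t=1..T. norm (Ms (t + 1) - Ms t))"
      using \<delta>(1) A[THEN eq_refl] B w lipschitz unfolding f_def K_def by (rule sum_cost_traj_le_sum_fcost)
    ultimately show ?thesis
      using comparator True by simp
  next
    case False
    have l: "0 \<le> l"
      using lipschitz[of 1] by (simp add: lipschitz_on_def)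
    have \<kappa>M: "0 < \<kappa>M"
      using in_Mset_imp_norm_le[OF M1] norm_ge_zero[of "Ms 1"] False by linarith
    have K: "0 \<le> K" "K \<le> z"
    proof -
      show "0 \<le> K"
        using wb order_trans[OF norm_ge_zero B] by (simp add: K_def)
      then have "K * 1 \<le> K * sqrt (real CARD('du))"
        by (intro mult_left_mono) auto
      then show "K \<le> z"
        by (simp add: K_def z_def mult_ac)
    qed
    then have a: "0 < \<delta>\<^sup>2 + 2 * l * z"
      using \<delta>(1) l by (simp add: add_pos_nonneg)
    then have "0 < \<sigma>"
      using \<delta>(1) \<kappa>M by (simp add: \<sigma>_def)
    have H_nonneg: "0 \<le> H T"
      unfolding H_def g_def h_def
      by (intro sum_nonneg Max_ge_iff[THEN iffD2]) (auto intro!: bexI[of _ 1] simp: le_max_iff_disj)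
    have "adaptive_ftrl (Mset \<kappa>M) f G \<sigma> h Ms"
    proof (rule adaptive_ftrlI)
      have "\<sigma>s = adaptive_weight \<sigma> h"
        by (simp add: fun_eq_iff \<sigma>s_def H_def adaptive_weight_def)
      then show "\<And>t. t \<ge> 1 \<Longrightarrow> Ms (t + 1) \<in> Mset \<kappa>M \<and> (\<forall>y\<in>Mset \<kappa>M.
          ftrl_objective f (adaptive_weight \<sigma> h) Ms t (Ms (t + 1)) \<le> ftrl_objective f (adaptive_weight \<sigma> h) Ms t y)"
        using ftrl unfolding ftrl_objective_def by simp
      have "g t \<le> h t" if "t \<ge> 1" for t
        unfolding h_def using that by (intro Max_ge) auto
      then show "\<And>t. t \<ge> 1 \<Longrightarrow> norm (G t) \<le> h t" "\<And>t. t \<ge> 1 \<Longrightarrow> (norm (G t))\<^sup>2 \<le> h t"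
        by (auto simp: g_def intro: order_trans)
      show "convex_on (Mset \<kappa>M) (f t)" if "t \<ge> 1" for t
        unfolding f_def using fcost_convex[of c t, OF convex[OF that]] subset_UNIV convex_Mset
        by (rule convex_on_subset)
    qed (use convex_Mset M1 subgrad \<open>0 < \<sigma>\<close> h1 in auto)
    then have "?actual - (\<Sum>t=1..T. f t Mstar)
        \<le> ((1 + 2 * l * K / \<delta>\<^sup>2) / \<sigma> + 2 * \<sigma> * \<kappa>M\<^sup>2) * sqrt (H T)"
      using \<delta>(1) A[THEN eq_refl] B w lipschitz Mstar(1) unfolding f_def K_def H_def
      by (rule ftrl_controller_regret)
    also have "\<dots> \<le> 2 * \<kappa>M / \<delta> * sqrt (2 * (\<delta>\<^sup>2 + 2 * l * z)) * sqrt (H T)"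
    proof (intro mult_right_mono tuned_rate_bound[OF \<delta>(1) \<kappa>M a \<sigma>_def[THEN meta_eq_to_obj_eq]])
      have "(\<delta>\<^sup>2 + 2 * l * K) / \<delta>\<^sup>2 \<le> (\<delta>\<^sup>2 + 2 * l * z) / \<delta>\<^sup>2"
        using K l by (intro divide_right_mono add_left_mono mult_left_mono) auto
      then show "1 + 2 * l * K / \<delta>\<^sup>2 \<le> (\<delta>\<^sup>2 + 2 * l * z) / \<delta>\<^sup>2"
        using \<delta>(1) by (simp add: add_divide_distrib)
    qed (use H_nonneg in simp)
    also have "\<dots> \<le> 2 * \<kappa>M / \<delta> * (sqrt (2 * (\<delta>\<^sup>2 + 2 * l * z)) + l * z / (\<delta> * sqrt (h 1))) * sqrt (H T)"
      using \<delta>(1) \<kappa>M l K h1 H_nonneg by (intro mult_right_mono mult_left_mono) auto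
    finally show ?thesis
      using comparator by simp
  qed
qed

end
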